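(* Let the setting of the context hold, fix $x\in\mathcal{X}$, and assume $|\mathcal{L}_f(z,t)|\le M$ and $|g_t(z)|\le G$ for all $z$ and $t\in\{0,1\}$. Then $$\epsilon_f(x)\le 2\Big[G^2\big(\epsilon_{F,0}(x)+\epsilon_{F,1}(x)+M\,\mathbb{D}(x)\big)-\mathbb{V}_Y(x)\Big],$$ where $\mathbb{D}(x):=\sum_{t\in\{0,1\}}\sqrt{D_{\mathrm{KL}}(q_t(\cdot\mid x)\,\Vert\, q_{1-t}(\cdot\mid x))/2}$ and $\mathbb{V}_Y(x):=\mathbb{E}_{q(z\mid x)}\sum_{t}\mathbb{E}_{p_{Y(t)\mid\mathbb{P}_t}(y\mid z)}(y-j_t(z))^2$.
   Context: Binary treatment $T\in\{0,1\}$, covariates $X\in\mathcal{X}$, real-valued (univariate) potential outcomes $Y(t)$, observed $Y=Y(T)$, observational distribution $p(x,y,t)$, exchangeability $Y(t)\perp T\mid X$. Data generating assumption: $Y=f^*(\mathbb{M}(X),T)+e$ with $e$ zero-mean exogenous noise, and $\mu_t(X):=\mathbb{E}(Y(t)\mid X)=j_t(\mathbb{P}_t(X))$ for functions $\mathbb{P}_t$ and injective $j_t$, where $\mathbb{P}_t$ satisfies $Y(t)\perp X\mid\mathbb{P}_t(X)$; $p_{Y(t)\mid\mathbb{P}_t}(y\mid P)$ denotes the conditional density of $Y(t)$ given $\mathbb{P}_t(X)=P$. Let $f_t,g_t$ ($t=0,1$) be functions of $z$ and $q_\phi(z\mid x,y,t)$ any conditional density (encoder). Define $q_t(z\mid x):=\mathbb{E}_{p(y\mid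 x,t)}q_\phi(z\mid x,y,t)$ and $q(z\mid x):=\mathbb{E}_{p(y,t\mid x)}q_\phi(z\mid x,y,t)$. Define $\mathcal{L}_f(z,t):=g_t(z)^{-2}\int(y-f_t(z))^2p_{Y(t)\mid\mathbb{P}_t}(y\mid z)\,dy$, $\epsilon_{F,t}(x):=\mathbb{E}_{q_t(z\mid x)}\mathcal{L}_f(z,t)$, $\epsilon_{CF,t}(x):=\mathbb{E}_{q_{1-t}(z\mid x)}\mathcal{L}_f(z,t)$, $\hat\tau_f(z):=f_1(z)-f_0(z)$, $\tau_j(z):=j_1(z)-j_0(z)$, and $\epsilon_f(x):=\mathbb{E}_{q(z\mid x)}(\hat\tau_f(z)-\tau_j(z))^2$. *)

theory Defs
  imports "HOL-Probability.Probability"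
begin

text \<open>Binary treatment t :: bool (True = 1, False = 0; 1 - t is \<not> t).
  Latent space: a measure space N (reference measure); all latent densities are w.r.t. N.\<close>

definition q_t :: "('x \<Rightarrow> real \<Rightarrow> bool \<Rightarrow> 'z \<Rightarrow> real) \<Rightarrow> ('x \<Rightarrow> bool \<Rightarrow> real \<Rightarrow> real)
                   \<Rightarrow> 'x \<Rightarrow> bool \<Rightarrow> 'z \<Rightarrow> real" where
  "q_t qphi py x t z = (\<integral>y. py x t y * qphi x y t z \<partial>lborel)"

definition q_mix :: "('x \<Rightarrow> real \<Rightarrow> bool \<Rightarrow> 'z \<Rightarrow> real) \<Rightarrow> ('x \<Rightarrow> bool \<Rightarrow> real \<Rightarrow> real)
                   \<Rightarrow> ('x \<Rightarrow> bool \<Rightarrow> real) \<Rightarrow> 'x \<Rightarrow> 'z \<Rightarrow> real" where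
  "q_mix qphi py pt x z = (\<Sum>t\<in>UNIV. pt x t * q_t qphi py x t z)"

definition L_f :: "(bool \<Rightarrow> 'z \<Rightarrow> real) \<Rightarrow> (bool \<Rightarrow> 'z \<Rightarrow> real) \<Rightarrow> (bool \<Rightarrow> 'z \<Rightarrow> real \<Rightarrow> real)
                   \<Rightarrow> 'z \<Rightarrow> bool \<Rightarrow> real" where
  "L_f f g pY z t = inverse ((g t z)\<^sup>2) * (\<integral>y. (y - f t z)\<^sup>2 * pY t z y \<partial>lborel)"

definition eps_F :: "'z measure \<Rightarrow> ('x \<Rightarrow> real \<Rightarrow> bool \<Rightarrow> 'z \<Rightarrow> real) \<Rightarrow> ('x \<Rightarrow> bool \<Rightarrow> real \<Rightarrow> real)
    \<Rightarrow> (bool \<Rightarrow> 'z \<Rightarrow> real) \<Rightarrow> (bool \<Rightarrow> 'z \<Rightarrow> real) \<Rightarrow> (bool \<Rightarrow> 'z \<Rightarrow> real \<Rightarrow> real)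
    \<Rightarrow> 'x \<Rightarrow> bool \<Rightarrow> real" where
  "eps_F N qphi py f g pY x t = (\<integral>z. q_t qphi py x t z * L_f f g pY z t \<partial>N)"

definition eps_f :: "'z measure \<Rightarrow> ('x \<Rightarrow> real \<Rightarrow> bool \<Rightarrow> 'z \<Rightarrow> real) \<Rightarrow> ('x \<Rightarrow> bool \<Rightarrow> real \<Rightarrow> real)
    \<Rightarrow> ('x \<Rightarrow> bool \<Rightarrow> real) \<Rightarrow> (bool \<Rightarrow> 'z \<Rightarrow> real) \<Rightarrow> (bool \<Rightarrow> 'z \<Rightarrow> real) \<Rightarrow> 'x \<Rightarrow> real" where
  "eps_f N qphi py pt f j x =
     (\<integral>z. q_mix qphi py pt x z * ((f True z - f False z) - (j True z - j False z))\<^sup>2 \<partial>N)"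

text \<open>Kullback-Leibler divergence D_KL(P || Q) (natural logarithm) of two densities on N,
  via the library notion: KL_divergence b Q P = \<integral> log_b (dP/dQ) dP.\<close>
definition D_KL :: "'z measure \<Rightarrow> ('z \<Rightarrow> real) \<Rightarrow> ('z \<Rightarrow> real) \<Rightarrow> real" where
  "D_KL N p q = KL_divergence (exp 1) (density N (\<lambda>z. ennreal (q z))) (density N (\<lambda>z. ennreal (p z)))"

definition D_bal :: "'z measure \<Rightarrow> ('x \<Rightarrow> real \<Rightarrow> bool \<Rightarrow> 'z \<Rightarrow> real) \<Rightarrow> ('x \<Rightarrow> bool \<Rightarrow> real \<Rightarrow> real)
    \<Rightarrow> 'x \<Rightarrow> real" where
  "D_bal N qphi py x = (\<Sum>t\<in>UNIV. sqrt (D_KL N (q_t qphi py x t) (q_t qphi py x (\<not> t)) / 2))"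

definition V_Y :: "'z measure \<Rightarrow> ('x \<Rightarrow> real \<Rightarrow> bool \<Rightarrow> 'z \<Rightarrow> real) \<Rightarrow> ('x \<Rightarrow> bool \<Rightarrow> real \<Rightarrow> real)
    \<Rightarrow> ('x \<Rightarrow> bool \<Rightarrow> real) \<Rightarrow> (bool \<Rightarrow> 'z \<Rightarrow> real) \<Rightarrow> (bool \<Rightarrow> 'z \<Rightarrow> real \<Rightarrow> real) \<Rightarrow> 'x \<Rightarrow> real" where
  "V_Y N qphi py pt j pY x =
     (\<integral>z. q_mix qphi py pt x z * (\<Sum>t\<in>UNIV. \<integral>y. (y - j t z)\<^sup>2 * pY t z y \<partial>lborel) \<partial>N)"

end

theory Submission
  imports Defs
begin

text \<open>
  Pointwise, (hat tau_f - tau_j)^2 \<le> 2 ((f_1 - j_1)^2 + (f_0 - j_0)^2), and since j_t(z) is the mean of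
  p_{Y(t)|P_t}(.|z), the bias-variance decomposition gives (f_t - j_t)^2 + V_t = g_t^2 L_f(., t) \<le> G^2 L_f(., t),
  with V_t the conditional variance of Y(t). Integrating against q = p(1|x) q_1 + p(0|x) q_0 leaves, for
  each t, a convex combination of the factual risk \<integral> q_t L_f(., t) and the counterfactual risk
  \<integral> q_{1-t} L_f(., t). As 0 \<le> L_f \<le> M, these differ by at most M times the total variation distance of
  q_t and q_{1-t}, which Pinsker's inequality bounds by M sqrt(D_KL(q_t || q_{1-t}) / 2).
  Pinsker's inequality itself follows by integrating the classical pointwise bound
  3 (p - r)^2 \<le> (2p + 4r)(p ln(p/r) - p + r), split by AM-GM with a free weight that is optimised
  afterwards.
\<close>

section \<open>Probability densities\<close>

definition prob_density :: "'a measure \<Rightarrow> ('a \<Rightarrow> real) \<Rightarrow> bool" where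
  "prob_density M p \<longleftrightarrow> integrable M p \<and> (\<forall>z\<in>space M. 0 \<le> p z) \<and> integral\<^sup>L M p = 1"

lemma prob_densityI_nn_integral:
  assumes "p \<in> borel_measurable M" "\<And>z. z \<in> space M \<Longrightarrow> 0 \<le> p z" "(\<integral>\<^sup>+z. p z \<partial>M) = 1"
  shows "prob_density M p"
proof -
  have "integrable M p"
    using assms by (intro integrableI_nonneg) auto
  moreover have "integral\<^sup>L M p = 1"
    using assms by (subst integral_eq_nn_integral) auto
  ultimately show ?thesis
    using assms(2) by (simp add: prob_density_def)
qed

lemma prob_density_space_nonempty:
  assumes "prob_density M p"
  shows "space M \<noteq> {}"
proof
  assume "space M = {}"
  then have "M = count_space {}"
    by (rule space_empty)
  then show False
    using assms by (simp add: prob_density_def lebesgue_integral_count_space_finite)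
qed

lemma prob_density_imp_prob_space:
  assumes "prob_density M p"
  shows "prob_space (density M p)"
proof
  have "emeasure (density M p) (space M) = (\<integral>\<^sup>+z. p z \<partial>M)"
    using assms by (subst emeasure_density) (auto simp: prob_density_def intro!: nn_integral_cong)
  also have "\<dots> = 1"
    using assms by (subst nn_integral_eq_integral) (auto simp: prob_density_def)
  finally show "emeasure (density M p) (space (density M p)) = 1"
    by simp
qed

lemma integrable_mult_bounded:
  fixes q h :: "'a \<Rightarrow> real"
  assumes "integrable M q" "h \<in> borel_measurable M" "\<And>z. z \<in> space M \<Longrightarrow> \<bar>h z\<bar> \<le> B"
  shows "integrable M (\<lambda>z. q z * h z)"
proof (rule Bochner_Integration.integrable_bound)
  show "integrable M (\<lambda>z. B * \<bar>q z\<bar>)"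
    using assms(1) by auto
  show "(\<lambda>z. q z * h z) \<in> borel_measurable M"
    using assms(1,2) by measurable
  show "AE z in M. norm (q z * h z) \<le> norm (B * \<bar>q z\<bar>)"
  proof (rule AE_I2)
    fix z assume "z \<in> space M"
    then have "\<bar>h z\<bar> \<le> \<bar>B\<bar>"
      using assms(3) by (meson abs_ge_self order_trans)
    then show "norm (q z * h z) \<le> norm (B * \<bar>q z\<bar>)"
      by (simp add: abs_mult mult.commute mult_right_mono)
  qed
qed

lemma prob_density_kernel_mixture:
  fixes p :: "'a \<Rightarrow> real" and Q :: "'a \<Rightarrow> 'b \<Rightarrow> real"
  assumes M: "sigma_finite_measure M" and N: "sigma_finite_measure N"
    and p: "p \<in> borel_measurable M" "\<And>y. y \<in> space M \<Longrightarrow> 0 \<le> p y" "(\<integral>\<^sup>+y. p y \<partial>M) = 1"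
    and Q: "(\<lambda>(y, z). Q y z) \<in> borel_measurable (M \<Otimes>\<^sub>M N)"
      "\<And>y z. y \<in> space M \<Longrightarrow> z \<in> space N \<Longrightarrow> 0 \<le> Q y z"
      "\<And>y. y \<in> space M \<Longrightarrow> (\<integral>\<^sup>+z. Q y z \<partial>N) = 1"
  shows "prob_density N (\<lambda>z. \<integral>y. p y * Q y z \<partial>M)"
proof -
  interpret M: sigma_finite_measure M by (rule M)
  interpret pair_sigma_finite M N by (intro pair_sigma_finite.intro M N)
  note [measurable] = p(1) Q(1)
  have Q_swap[measurable]: "(\<lambda>(z, y). Q y z) \<in> borel_measurable (N \<Otimes>\<^sub>M M)"
    using measurable_pair_swap[OF Q(1)] by (simp add: case_prod_beta')
  define F where "F z = (\<integral>\<^sup>+y. p y * Q y z \<partial>M)" for z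
  have [measurable]: "F \<in> borel_measurable N"
    unfolding F_def by measurable
  have "(\<integral>\<^sup>+z. F z \<partial>N) = (\<integral>\<^sup>+y. (\<integral>\<^sup>+z. p y * Q y z \<partial>N) \<partial>M)"
    unfolding F_def by (rule Fubini') measurable
  also have "\<dots> = (\<integral>\<^sup>+y. p y \<partial>M)"
  proof (rule nn_integral_cong)
    fix y assume y: "y \<in> space M"
    have [measurable]: "Q y \<in> borel_measurable N"
      using measurable_compose[OF measurable_Pair1'[OF y] Q(1)] by simp
    have "(\<integral>\<^sup>+z. p y * Q y z \<partial>N) = p y * (\<integral>\<^sup>+z. Q y z \<partial>N)"
      using p(2)[OF y] Q(2)[OF y] by (subst nn_integral_cmult[symmetric]) (auto simp: ennreal_mult intro!: nn_integral_cong)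
    then show "(\<integral>\<^sup>+z. p y * Q y z \<partial>N) = p y"
      using Q(3)[OF y] by simp
  qed
  finally have F_one: "(\<integral>\<^sup>+z. F z \<partial>N) = 1"
    using p(3) by simp
  have mixture_eq: "(\<integral>y. p y * Q y z \<partial>M) = enn2real (F z)" if "z \<in> space N" for z
    unfolding F_def using that p(2) Q(2) by (intro integral_eq_nn_integral) auto
  have "AE z in N. F z \<noteq> \<infinity>"
    using F_one by (intro nn_integral_PInf_AE) auto
  then have "(\<integral>\<^sup>+z. (\<integral>y. p y * Q y z \<partial>M) \<partial>N) = (\<integral>\<^sup>+z. F z \<partial>N)"
    by (intro nn_integral_cong_AE) (auto simp: mixture_eq ennreal_enn2real_if)
  then show ?thesis
    using F_one p(2) Q(2) by (intro prob_densityI_nn_integral) (auto intro!: Bochner_Integration.integral_nonneg)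
qed

lemma integral_square_deviation_eq:
  fixes p :: "real \<Rightarrow> real"
  assumes p: "prob_density lborel p" and sq: "integrable lborel (\<lambda>y. y\<^sup>2 * p y)"
    and mean: "(\<integral>y. y * p y \<partial>lborel) = m"
  shows "(\<integral>y. (y - c)\<^sup>2 * p y \<partial>lborel) = (\<integral>y. (y - m)\<^sup>2 * p y \<partial>lborel) + (c - m)\<^sup>2"
proof -
  have int_p: "integrable lborel p"
    using p by (simp add: prob_density_def)
  have int_y: "integrable lborel (\<lambda>y. y * p y)"
  proof (rule Bochner_Integration.integrable_bound)
    show "integrable lborel (\<lambda>y. y\<^sup>2 * p y + p y)"
      using sq int_p by simp
    show "AE y in lborel. norm (y * p y) \<le> norm (y\<^sup>2 * p y + p y)"
    proof (rule AE_I2)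
      fix y :: real assume y: "y \<in> space lborel"
      have "0 \<le> (\<bar>y\<bar> - 1)\<^sup>2"
        by simp
      then have "\<bar>y\<bar> \<le> y\<^sup>2 + 1"
        by (simp add: power2_eq_square algebra_simps)
      then have "\<bar>y\<bar> * p y \<le> (y\<^sup>2 + 1) * p y"
        using p y by (intro mult_right_mono) (auto simp: prob_density_def)
      then show "norm (y * p y) \<le> norm (y\<^sup>2 * p y + p y)"
        using p y by (simp add: prob_density_def abs_mult algebra_simps)
    qed
  qed (use borel_measurable_integrable[OF int_p] in measurable)
  have second_moment: "(\<integral>y. (y - c)\<^sup>2 * p y \<partial>lborel) = (\<integral>y. y\<^sup>2 * p y \<partial>lborel) - 2 * c * m + c\<^sup>2" for c
  proof -
    have "(\<lambda>y. (y - c)\<^sup>2 * p y) = (\<lambda>y. y\<^sup>2 * p y - 2 * c * (y * p y) + c\<^sup>2 * p y)"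
      by (simp add: fun_eq_iff power2_eq_square algebra_simps)
    then show ?thesis
      using p sq int_y mean by (simp add: prob_density_def)
  qed
  show ?thesis
    unfolding second_moment by (simp add: power2_eq_square algebra_simps)
qed

section \<open>Pinsker's inequality\<close>

lemma ln_ge_rational_bound:
  fixes u :: real
  assumes "0 < u"
  shows "(u - 1) * (5 * u + 1) / (2 * u * (u + 2)) \<le> ln u"
proof -
  define k where "k v = ln v - (v - 1) * (5 * v + 1) / (2 * v * (v + 2))" for v :: real
  have k_deriv: "(k has_real_derivative (v - 1) ^ 3 / (v\<^sup>2 * (v + 2)\<^sup>2)) (at v)" if "0 < v" for v
  proof -
    have "(k has_real_derivative 1 / v - ((5 * v + 1 + (v - 1) * 5) * (2 * v * (v + 2))
        - (v - 1) * (5 * v + 1) * (2 * (v + 2) + 2 * v)) / (2 * v * (v + 2))\<^sup>2) (at v)"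
      unfolding k_def[abs_def] using that
      by (auto intro!: derivative_eq_intros simp: power2_eq_square)
    moreover have "1 / v - ((5 * v + 1 + (v - 1) * 5) * (2 * v * (v + 2))
        - (v - 1) * (5 * v + 1) * (2 * (v + 2) + 2 * v)) / (2 * v * (v + 2))\<^sup>2
        = (v - 1) ^ 3 / (v\<^sup>2 * (v + 2)\<^sup>2)"
      using that by (simp add: divide_simps power2_eq_square power3_eq_cube) (simp add: algebra_simps)
    ultimately show ?thesis
      by simp
  qed
  have k_cont: "continuous_on {a..b} k" if "0 < a" for a b
    using that by (intro continuous_at_imp_continuous_on ballI DERIV_isCont[OF k_deriv]) auto
  have "k 1 \<le> k u"
  proof (cases "1 \<le> u")
    case True
    show ?thesis
    proof (rule DERIV_nonneg_imp_increasing_open[OF True _ k_cont])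
      fix v :: real assume "1 < v" "v < u"
      then show "\<exists>y. (k has_real_derivative y) (at v) \<and> 0 \<le> y"
        using k_deriv[of v] by (intro exI[of _ "(v - 1) ^ 3 / (v\<^sup>2 * (v + 2)\<^sup>2)"]) auto
    qed simp
  next
    case False
    show ?thesis
    proof (rule DERIV_nonpos_imp_decreasing_open[of u 1 k, OF _ _ k_cont[OF assms]])
      fix v :: real assume "u < v" "v < 1"
      then show "\<exists>y. (k has_real_derivative y) (at v) \<and> y \<le> 0"
        using assms k_deriv[of v]
        by (intro exI[of _ "(v - 1) ^ 3 / (v\<^sup>2 * (v + 2)\<^sup>2)"]) (auto simp: divide_nonpos_nonneg)
    qed (use False in simp)
  qed
  then show ?thesis
    by (simp add: k_def)
qed

lemma square_diff_le_KL_integrand: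
  fixes p r :: real
  assumes "0 \<le> p" "0 \<le> r" "r = 0 \<longrightarrow> p = 0"
  shows "3 * (p - r)\<^sup>2 \<le> (2 * p + 4 * r) * (p * ln (p / r) - p + r)"
proof (cases "p = 0")
  case True
  then show ?thesis
    using assms by (simp add: power2_eq_square)
next
  case False
  then have p: "0 < p" and r: "0 < r"
    using assms by auto
  have "(p / r - 1) * (5 * (p / r) + 1) / (2 * (p / r) * (p / r + 2)) \<le> ln (p / r)"
    using p r by (intro ln_ge_rational_bound) simp
  also have "(p / r - 1) * (5 * (p / r) + 1) / (2 * (p / r) * (p / r + 2))
      = (p - r) * (5 * p + r) / (2 * p * (p + 2 * r))"
    using p r by (simp add: divide_simps)
  finally have "(p - r) * (5 * p + r) \<le> 2 * p * (p + 2 * r) * ln (p / r)"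
    using p r by (simp add: divide_le_eq mult.commute)
  moreover have "3 * (p - r)\<^sup>2 = (p - r) * (5 * p + r) + (2 * p + 4 * r) * (r - p)"
    and "(2 * p + 4 * r) * (p * ln (p / r) - p + r) = 2 * p * (p + 2 * r) * ln (p / r) + (2 * p + 4 * r) * (r - p)"
    by (simp_all add: algebra_simps power2_eq_square)
  ultimately show ?thesis
    by linarith
qed

lemma abs_diff_le_KL_integrand:
  fixes p r l :: real
  assumes "0 \<le> p" "0 \<le> r" "r = 0 \<longrightarrow> p = 0" "0 < l"
  shows "\<bar>p - r\<bar> \<le> (l * ((2 * p + 4 * r) / 3) + (p * ln (p / r) - p + r) / l) / 2"
proof -
  define a where "a = (2 * p + 4 * r) / 3"
  define b where "b = p * ln (p / r) - p + r"
  have sq: "(p - r)\<^sup>2 \<le> a * b"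
    using square_diff_le_KL_integrand[OF assms(1-3)] by (simp add: a_def b_def)
  have a: "0 \<le> a"
    using assms by (simp add: a_def)
  have b: "0 \<le> b"
  proof (cases "a = 0")
    case True
    then have "p = 0" "r = 0"
      using assms by (auto simp: a_def)
    then show ?thesis
      by (simp add: b_def)
  next
    case False
    have "0 \<le> a * b"
      using sq zero_le_power2 order_trans by blast
    then show ?thesis
      using False a by (simp add: zero_le_mult_iff)
  qed
  have "\<bar>p - r\<bar> = sqrt ((p - r)\<^sup>2)"
    by simp
  also have "\<dots> \<le> sqrt (a * b)"
    using sq by (rule real_sqrt_le_mono)
  also have "a * b = (l * a) * (b / l)"
    using assms(4) by simp
  also have "sqrt \<dots> \<le> (l * a + b / l) / 2"
    using assms(4) a b by (intro arith_geo_mean_sqrt) auto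
  finally show ?thesis
    by (simp add: a_def b_def)
qed

lemma le_two_sqrt_if_le_add_divide:
  fixes t c :: real
  assumes "0 \<le> c" "\<And>l. 0 < l \<Longrightarrow> t \<le> l + c / l"
  shows "t \<le> 2 * sqrt c"
proof (cases "c = 0")
  case True
  have "t \<le> 0"
  proof (rule dense_ge)
    fix l :: real
    assume "0 < l"
    then show "t \<le> l"
      using assms(2)[of l] True by simp
  qed
  then show ?thesis
    using True by simp
next
  case False
  then have "t \<le> sqrt c + c / sqrt c"
    using assms by simp
  also have "c / sqrt c = sqrt c"
    using assms(1) by (rule real_div_sqrt)
  finally show ?thesis
    by simp
qed

lemma D_KL_eq_integral:
  assumes N: "sigma_finite_measure N" and p: "prob_density N p" and r: "prob_density N r"
    and ac: "AE z in N. r z = 0 \<longrightarrow> p z = 0"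
  shows "D_KL N p r = (\<integral>z. p z * ln (p z / r z) \<partial>N)"
proof -
  have "D_KL N p r = (\<integral>z. p z * log (exp 1) (p z / r z) \<partial>N)"
    unfolding D_KL_def using p r ac
    by (intro sigma_finite_measure.KL_density_density[OF N])
      (auto simp: prob_density_def intro: borel_measurable_integrable)
  then show ?thesis
    by (simp add: log_def)
qed

lemma D_KL_nonneg:
  assumes N: "sigma_finite_measure N" and p: "prob_density N p" and r: "prob_density N r"
    and ac: "AE z in N. r z = 0 \<longrightarrow> p z = 0"
    and int: "integrable N (\<lambda>z. p z * ln (p z / r z))"
  shows "0 \<le> D_KL N p r"
  unfolding D_KL_def using p r ac int
  by (intro sigma_finite_measure.KL_density_density_nonneg[OF N] prob_density_imp_prob_space)
    (auto simp: prob_density_def log_def intro: borel_measurable_integrable)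

theorem pinsker_inequality:
  assumes N: "sigma_finite_measure N" and p: "prob_density N p" and r: "prob_density N r"
    and ac: "AE z in N. r z = 0 \<longrightarrow> p z = 0"
    and int: "integrable N (\<lambda>z. p z * ln (p z / r z))"
  shows "(\<integral>z. \<bar>p z - r z\<bar> \<partial>N) / 2 \<le> sqrt (D_KL N p r / 2)"
proof -
  define K where "K = D_KL N p r"
  have K_eq: "K = (\<integral>z. p z * ln (p z / r z) \<partial>N)"
    unfolding K_def using N p r ac by (rule D_KL_eq_integral)
  have "(\<integral>z. \<bar>p z - r z\<bar> \<partial>N) \<le> l + (K / 2) / l" if l: "0 < l" for l
  proof -
    have "(\<integral>z. \<bar>p z - r z\<bar> \<partial>N)
        \<le> (\<integral>z. (l * ((2 * p z + 4 * r z) / 3) + (p z * ln (p z / r z) - p z + r z) / l) / 2 \<partial>N)"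
    proof (rule integral_mono_AE)
      show "AE z in N. \<bar>p z - r z\<bar> \<le> (l * ((2 * p z + 4 * r z) / 3) + (p z * ln (p z / r z) - p z + r z) / l) / 2"
        using ac AE_space
      proof eventually_elim
        case (elim z)
        then show ?case
          using p r l by (intro abs_diff_le_KL_integrand) (auto simp: prob_density_def)
      qed
    qed (use p r int in \<open>auto simp: prob_density_def\<close>)
    also have "\<dots> = (l * ((2 * 1 + 4 * 1) / 3) + (K - 1 + 1) / l) / 2"
      using p r int by (simp add: prob_density_def K_eq)
    also have "\<dots> = l + (K / 2) / l"
      by (simp add: field_simps)
    finally show ?thesis .
  qed
  then have "(\<integral>z. \<bar>p z - r z\<bar> \<partial>N) \<le> 2 * sqrt (K / 2)"
    using D_KL_nonneg[OF N p r ac int] by (intro le_two_sqrt_if_le_add_divide) (auto simp: K_def)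
  then show ?thesis
    by (simp add: K_def)
qed

lemma integral_diff_le_L1_distance:
  assumes p: "prob_density N p" and r: "prob_density N r"
    and L: "L \<in> borel_measurable N" "\<And>z. z \<in> space N \<Longrightarrow> 0 \<le> L z" "\<And>z. z \<in> space N \<Longrightarrow> L z \<le> M"
  shows "(\<integral>z. r z * L z \<partial>N) - (\<integral>z. p z * L z \<partial>N) \<le> M * ((\<integral>z. \<bar>p z - r z\<bar> \<partial>N) / 2)"
proof -
  have L_abs: "\<bar>L z\<bar> \<le> M" if "z \<in> space N" for z
    using L that by auto
  have int_L: "integrable N (\<lambda>z. p z * L z)" "integrable N (\<lambda>z. r z * L z)"
    using p r L(1) L_abs by (auto simp: prob_density_def intro!: integrable_mult_bounded)
  have "(\<integral>z. r z * L z \<partial>N) - (\<integral>z. p z * L z \<partial>N) = (\<integral>z. (r z - p z) * L z \<partial>N)"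
    using int_L by (simp add: left_diff_distrib)
  \<comment> \<open>comparing L with the midpoint M / 2 of its range, not with 0, gains the factor 1 / 2\<close>
  also have "\<dots> \<le> (\<integral>z. M * (\<bar>p z - r z\<bar> / 2) + M / 2 * (r z - p z) \<partial>N)"
  proof (rule integral_mono)
    fix z assume z: "z \<in> space N"
    show "(r z - p z) * L z \<le> M * (\<bar>p z - r z\<bar> / 2) + M / 2 * (r z - p z)"
    proof (cases "p z \<le> r z")
      case True
      then have "(r z - p z) * L z \<le> (r z - p z) * M"
        using L z by (intro mult_left_mono) auto
      then show ?thesis
        using True by (simp add: algebra_simps)
    next
      case False
      then have "M * (\<bar>p z - r z\<bar> / 2) + M / 2 * (r z - p z) = 0"
        by (simp add: field_simps)
      moreover have "(r z - p z) * L z \<le> 0"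
        using False L z by (simp add: mult_nonpos_nonneg)
      ultimately show ?thesis
        by linarith
    qed
  qed (use p r int_L in \<open>auto simp: prob_density_def left_diff_distrib\<close>)
  also have "\<dots> = M * ((\<integral>z. \<bar>p z - r z\<bar> \<partial>N) / 2)"
    using p r by (simp add: prob_density_def)
  finally show ?thesis .
qed

corollary integral_diff_le_KL:
  assumes N: "sigma_finite_measure N" and p: "prob_density N p" and r: "prob_density N r"
    and ac: "AE z in N. r z = 0 \<longrightarrow> p z = 0"
    and int: "integrable N (\<lambda>z. p z * ln (p z / r z))"
    and L: "L \<in> borel_measurable N" "\<And>z. z \<in> space N \<Longrightarrow> 0 \<le> L z" "\<And>z. z \<in> space N \<Longrightarrow> L z \<le> M"
  shows "(\<integral>z. r z * L z \<partial>N) - (\<integral>z. p z * L z \<partial>N) \<le> M * sqrt (D_KL N p r / 2)"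
proof -
  obtain z where "z \<in> space N"
    using prob_density_space_nonempty[OF p] by blast
  then have "0 \<le> M"
    using L by (meson order_trans)
  then show ?thesis
    using integral_diff_le_L1_distance[OF p r L] pinsker_inequality[OF N p r ac int]
    by (meson mult_left_mono order_trans)
qed

section \<open>The error bound\<close>

definition outcome_variance :: "(bool \<Rightarrow> 'z \<Rightarrow> real) \<Rightarrow> (bool \<Rightarrow> 'z \<Rightarrow> real \<Rightarrow> real) \<Rightarrow> bool \<Rightarrow> 'z \<Rightarrow> real"
  where "outcome_variance j pY t z = (\<integral>y. (y - j t z)\<^sup>2 * pY t z y \<partial>lborel)"

lemma outcome_variance_nonneg: "(\<And>y. 0 \<le> pY t z y) \<Longrightarrow> 0 \<le> outcome_variance j pY t z"
  unfolding outcome_variance_def by (intro Bochner_Integration.integral_nonneg) auto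

lemma L_f_nonneg: "(\<And>y. 0 \<le> pY t z y) \<Longrightarrow> 0 \<le> L_f f g pY z t"
  unfolding L_f_def by (intro mult_nonneg_nonneg Bochner_Integration.integral_nonneg) auto

lemma square_bias_add_outcome_variance_le_L_f:
  assumes pY: "prob_density lborel (pY t z)" "integrable lborel (\<lambda>y. y\<^sup>2 * pY t z y)"
    and mean: "(\<integral>y. y * pY t z y \<partial>lborel) = j t z"
    and g: "g t z \<noteq> 0" "\<bar>g t z\<bar> \<le> G"
  shows "(f t z - j t z)\<^sup>2 + outcome_variance j pY t z \<le> G\<^sup>2 * L_f f g pY z t"
proof -
  have "(f t z - j t z)\<^sup>2 + outcome_variance j pY t z = (\<integral>y. (y - f t z)\<^sup>2 * pY t z y \<partial>lborel)"
    using integral_square_deviation_eq[OF pY mean, of "f t z"] by (simp add: outcome_variance_def)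
  also have "\<dots> = (g t z)\<^sup>2 * L_f f g pY z t"
    using g by (simp add: L_f_def)
  also have "\<dots> \<le> G\<^sup>2 * L_f f g pY z t"
  proof (rule mult_right_mono)
    show "(g t z)\<^sup>2 \<le> G\<^sup>2"
      using g(2) by (metis abs_le_square_iff abs_ge_self order_trans)
    show "0 \<le> L_f f g pY z t"
      using pY by (intro L_f_nonneg) (simp add: prob_density_def)
  qed
  finally show ?thesis .
qed

lemma borel_measurable_L_f:
  assumes "(\<lambda>(z, y). pY t z y) \<in> borel_measurable (N \<Otimes>\<^sub>M lborel)"
    and "f t \<in> borel_measurable N" "g t \<in> borel_measurable N"
  shows "(\<lambda>z. L_f f g pY z t) \<in> borel_measurable N"
proof -
  note [measurable] = assms
  show ?thesis
    unfolding L_f_def by measurable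
qed

lemma borel_measurable_outcome_variance:
  assumes "(\<lambda>(z, y). pY t z y) \<in> borel_measurable (N \<Otimes>\<^sub>M lborel)" "j t \<in> borel_measurable N"
  shows "outcome_variance j pY t \<in> borel_measurable N"
proof -
  note [measurable] = assms
  show ?thesis
    unfolding outcome_variance_def[abs_def] by measurable
qed

lemma q_mix_eq: "q_mix qphi py pt x z = pt x True * q_t qphi py x True z + pt x False * q_t qphi py x False z"
  by (simp add: q_mix_def UNIV_bool add.commute)

lemma prob_density_q_mix:
  assumes "\<And>t. 0 \<le> pt x t" "pt x True + pt x False = 1" "\<And>t. prob_density N (q_t qphi py x t)"
  shows "prob_density N (q_mix qphi py pt x)"
  using assms unfolding q_mix_eq[abs_def] by (auto simp: prob_density_def)

lemma square_effect_error_le: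
  fixes f j :: "bool \<Rightarrow> 'z \<Rightarrow> real" and V L :: "bool \<Rightarrow> real"
  assumes "\<And>t. (f t z - j t z)\<^sup>2 + V t \<le> G\<^sup>2 * L t"
  shows "((f True z - f False z) - (j True z - j False z))\<^sup>2
    \<le> 2 * (G\<^sup>2 * (L False + L True) - (V True + V False))"
proof -
  have "((f True z - f False z) - (j True z - j False z))\<^sup>2
      \<le> 2 * ((f True z - j True z)\<^sup>2 + (f False z - j False z)\<^sup>2)"
    using zero_le_power2[of "(f True z - j True z) + (f False z - j False z)"]
    by (simp add: power2_eq_square algebra_simps)
  then show ?thesis
    using assms[of True] assms[of False] by (simp add: algebra_simps)
qed

lemma eps_f_le_mixture_risk:
  assumes q: "prob_density N (q_mix qphi py pt x)"
    and L_meas: "\<And>t. (\<lambda>z. L_f f g pY z t) \<in> borel_measurable N"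
    and V_meas: "\<And>t. outcome_variance j pY t \<in> borel_measurable N"
    and L_bound: "\<And>t z. z \<in> space N \<Longrightarrow> \<bar>L_f f g pY z t\<bar> \<le> M"
    and pY_nonneg: "\<And>t z y. z \<in> space N \<Longrightarrow> 0 \<le> pY t z y"
    and bias: "\<And>t z. z \<in> space N \<Longrightarrow> (f t z - j t z)\<^sup>2 + outcome_variance j pY t z \<le> G\<^sup>2 * L_f f g pY z t"
  shows "eps_f N qphi py pt f j x
    \<le> 2 * (G\<^sup>2 * ((\<integral>z. q_mix qphi py pt x z * L_f f g pY z False \<partial>N)
                 + (\<integral>z. q_mix qphi py pt x z * L_f f g pY z True \<partial>N))
           - V_Y N qphi py pt j pY x)"
proof -
  let ?q = "q_mix qphi py pt x" and ?L = "\<lambda>t z. L_f f g pY z t" and ?V = "outcome_variance j pY"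
  define R where "R z = 2 * (G\<^sup>2 * (?L False z + ?L True z) - (?V True z + ?V False z))" for z
  have V_bound: "\<bar>?V t z\<bar> \<le> G\<^sup>2 * M" if "z \<in> space N" for t z
  proof -
    have "?V t z \<le> G\<^sup>2 * ?L t z"
      using bias[OF that, of t] zero_le_power2[of "f t z - j t z"] by linarith
    also have "\<dots> \<le> G\<^sup>2 * M"
      using L_bound[OF that, of t] by (intro mult_left_mono) auto
    finally show ?thesis
      using outcome_variance_nonneg[of pY t z j] pY_nonneg[OF that] by simp
  qed
  have int_q: "integrable N ?q"
    using q by (simp add: prob_density_def)
  have int_L: "integrable N (\<lambda>z. ?q z * ?L t z)" for t
    using int_q L_meas L_bound by (rule integrable_mult_bounded)
  have int_V: "integrable N (\<lambda>z. ?q z * ?V t z)" for t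
    using int_q V_meas V_bound by (rule integrable_mult_bounded)
  have V_Y_eq: "V_Y N qphi py pt j pY x = (\<integral>z. ?q z * ?V False z + ?q z * ?V True z \<partial>N)"
    by (simp add: V_Y_def UNIV_bool outcome_variance_def distrib_left)
  have pointwise: "((f True z - f False z) - (j True z - j False z))\<^sup>2 \<le> R z" if "z \<in> space N" for z
    unfolding R_def using bias[OF that] by (rule square_effect_error_le)
  have "eps_f N qphi py pt f j x \<le> (\<integral>z. ?q z * R z \<partial>N)"
    unfolding eps_f_def
  proof (rule integral_mono')
    show "integrable N (\<lambda>z. ?q z * R z)"
      unfolding R_def using int_L int_V by (simp add: algebra_simps)
  qed (use q pointwise order_trans[OF zero_le_power2 pointwise] in
      \<open>auto simp: prob_density_def intro!: mult_left_mono\<close>)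
  also have "\<dots> = 2 * (G\<^sup>2 * ((\<integral>z. ?q z * ?L False z \<partial>N) + (\<integral>z. ?q z * ?L True z \<partial>N))
      - V_Y N qphi py pt j pY x)"
    unfolding R_def V_Y_eq using int_L int_V by (simp add: algebra_simps)
  finally show ?thesis .
qed

lemma integral_q_mix_le_KL:
  assumes N: "sigma_finite_measure N"
    and pt: "\<And>t. 0 \<le> pt x t" "pt x True + pt x False = 1"
    and q: "\<And>t. prob_density N (q_t qphi py x t)"
    and ac: "AE z in N. q_t qphi py x (\<not> t) z = 0 \<longrightarrow> q_t qphi py x t z = 0"
    and int: "integrable N (\<lambda>z. q_t qphi py x t z * ln (q_t qphi py x t z / q_t qphi py x (\<not> t) z))"
    and L: "L \<in> borel_measurable N" "\<And>z. z \<in> space N \<Longrightarrow> 0 \<le> L z" "\<And>z. z \<in> space N \<Longrightarrow> L z \<le> M"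
  shows "(\<integral>z. q_mix qphi py pt x z * L z \<partial>N)
    \<le> (\<integral>z. q_t qphi py x t z * L z \<partial>N) + M * sqrt (D_KL N (q_t qphi py x t) (q_t qphi py x (\<not> t)) / 2)"
proof -
  let ?p = "q_t qphi py x t" and ?r = "q_t qphi py x (\<not> t)"
  define a where "a = (\<integral>z. ?p z * L z \<partial>N)"
  define b where "b = (\<integral>z. ?r z * L z \<partial>N)"
  define c where "c = M * sqrt (D_KL N ?p ?r / 2)"
  have int_L: "integrable N (\<lambda>z. q_t qphi py x s z * L z)" for s
    using q[of s] L by (intro integrable_mult_bounded[where B = M]) (auto simp: prob_density_def)
  have "(\<integral>z. q_mix qphi py pt x z * L z \<partial>N)
      = pt x True * (\<integral>z. q_t qphi py x True z * L z \<partial>N) + pt x False * (\<integral>z. q_t qphi py x False z * L z \<partial>N)"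
    unfolding q_mix_eq distrib_right mult.assoc using int_L by simp
  then have mixture: "(\<integral>z. q_mix qphi py pt x z * L z \<partial>N) = pt x t * a + pt x (\<not> t) * b"
    by (cases t) (simp_all add: a_def b_def)
  have "b - a \<le> c"
    using integral_diff_le_KL[OF N q q ac int L] by (simp add: a_def b_def c_def)
  have "0 \<le> c"
  proof -
    obtain z where "z \<in> space N"
      using prob_density_space_nonempty[OF q[of t]] by blast
    then have "0 \<le> M"
      using L by (meson order_trans)
    then show ?thesis
      using D_KL_nonneg[OF N q q ac int] by (simp add: c_def)
  qed
  have weights: "pt x t = 1 - pt x (\<not> t)" "0 \<le> pt x (\<not> t)" "pt x (\<not> t) \<le> 1"
    using pt(1)[of t] pt(1)[of "\<not> t"] pt(2) by (cases t; simp)+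
  have "pt x t * a + pt x (\<not> t) * b = a + pt x (\<not> t) * (b - a)"
    unfolding weights(1) by (simp add: algebra_simps)
  also have "\<dots> \<le> a + pt x (\<not> t) * c"
    using \<open>b - a \<le> c\<close> weights(2) by (simp add: mult_left_mono)
  also have "\<dots> \<le> a + c"
    using \<open>0 \<le> c\<close> weights(2,3) by (simp add: mult_left_le_one_le)
  finally show ?thesis
    by (simp add: mixture a_def c_def)
qed

theorem theorem2:
  fixes N :: "'z measure"
    and qphi :: "'x \<Rightarrow> real \<Rightarrow> bool \<Rightarrow> 'z \<Rightarrow> real"
    and py :: "'x \<Rightarrow> bool \<Rightarrow> real \<Rightarrow> real"
    and pt :: "'x \<Rightarrow> bool \<Rightarrow> real"
    and pY :: "bool \<Rightarrow> 'z \<Rightarrow> real \<Rightarrow> real"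
    and f g j :: "bool \<Rightarrow> 'z \<Rightarrow> real"
    and x :: 'x
    and M G :: real
  assumes N: "sigma_finite_measure N"
    \<comment> \<open>p(t|x): a probability distribution on {0,1}\<close>
    and pt_nonneg: "\<And>t. 0 \<le> pt x t"
    and pt_sum: "pt x True + pt x False = 1"
    \<comment> \<open>p(y|x,t): a probability density on the reals\<close>
    and py_meas: "\<And>t. py x t \<in> borel_measurable lborel"
    and py_nonneg: "\<And>t y. 0 \<le> py x t y"
    and py_norm: "\<And>t. (\<integral>\<^sup>+ y. ennreal (py x t y) \<partial>lborel) = 1"
    \<comment> \<open>encoder q_phi(z|x,y,t): a conditional probability density on the latent space\<close>
    and qphi_meas: "\<And>t. (\<lambda>(y, z). qphi x y t z) \<in> borel_measurable (lborel \<Otimes>\<^sub>M N)"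
    and qphi_nonneg: "\<And>y t z. z \<in> space N \<Longrightarrow> 0 \<le> qphi x y t z"
    and qphi_norm: "\<And>y t. (\<integral>\<^sup>+ z. ennreal (qphi x y t z) \<partial>N) = 1"
    \<comment> \<open>p_{Y(t)|P_t}(y|z): conditional densities of Y(t) given P_t(X) = z, with finite second
        moment and mean j_t(z) (since mu_t(X) = j_t(P_t(X)) and Y(t) indep. of X given P_t(X))\<close>
    and pY_meas: "\<And>t. (\<lambda>(z, y). pY t z y) \<in> borel_measurable (N \<Otimes>\<^sub>M lborel)"
    and pY_nonneg: "\<And>t z y. z \<in> space N \<Longrightarrow> 0 \<le> pY t z y"
    and pY_norm: "\<And>t z. z \<in> space N \<Longrightarrow> (\<integral>\<^sup>+ y. ennreal (pY t z y) \<partial>lborel) = 1"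
    and pY_sq: "\<And>t z. z \<in> space N \<Longrightarrow> integrable lborel (\<lambda>y. y\<^sup>2 * pY t z y)"
    and pY_mean: "\<And>t z. z \<in> space N \<Longrightarrow> (\<integral>y. y * pY t z y \<partial>lborel) = j t z"
    and j_inj: "\<And>t. inj_on (j t) (space N)"
    \<comment> \<open>the functions f_t, g_t, j_t of z\<close>
    and f_meas: "\<And>t. f t \<in> borel_measurable N"
    and g_meas: "\<And>t. g t \<in> borel_measurable N"
    and j_meas: "\<And>t. j t \<in> borel_measurable N"
    and g_nz: "\<And>t z. z \<in> space N \<Longrightarrow> g t z \<noteq> 0"
    \<comment> \<open>the bounds of the theorem\<close>
    and L_bound: "\<And>t z. z \<in> space N \<Longrightarrow> \<bar>L_f f g pY z t\<bar> \<le> M"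
    and g_bound: "\<And>t z. z \<in> space N \<Longrightarrow> \<bar>g t z\<bar> \<le> G"
    \<comment> \<open>finiteness of the KL divergences D_KL(q_t || q_{1-t})\<close>
    and KL_ac: "\<And>t. AE z in N. q_t qphi py x (\<not> t) z = 0 \<longrightarrow> q_t qphi py x t z = 0"
    and KL_int: "\<And>t. integrable N (\<lambda>z. q_t qphi py x t z * ln (q_t qphi py x t z / q_t qphi py x (\<not> t) z))"
  shows "eps_f N qphi py pt f j x
           \<le> 2 * (G\<^sup>2 * (eps_F N qphi py f g pY x False + eps_F N qphi py f g pY x True
                        + M * D_bal N qphi py x)
                  - V_Y N qphi py pt j pY x)"
proof -
  have q: "prob_density N (q_t qphi py x t)" for t
    unfolding q_t_def[abs_def]
    using lborel.sigma_finite_measure_axioms N py_meas py_nonneg py_norm qphi_meas qphi_nonneg qphi_norm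
    by (rule prob_density_kernel_mixture)
  have pY: "prob_density lborel (pY t z)" if "z \<in> space N" for t z
    using measurable_compose[OF measurable_Pair1'[OF that] pY_meas[of t]] pY_nonneg[OF that] pY_norm[OF that]
    by (intro prob_densityI_nn_integral) auto
  have L_meas: "(\<lambda>z. L_f f g pY z t) \<in> borel_measurable N" for t
    using pY_meas f_meas g_meas by (rule borel_measurable_L_f)
  have L_range: "0 \<le> L_f f g pY z t" "L_f f g pY z t \<le> M" if "z \<in> space N" for t z
    using L_f_nonneg[of pY t z] pY_nonneg[OF that] L_bound[OF that, of t] by auto
  have bias: "(f t z - j t z)\<^sup>2 + outcome_variance j pY t z \<le> G\<^sup>2 * L_f f g pY z t"
    if "z \<in> space N" for t z
    using pY[OF that] pY_sq[OF that] pY_mean[OF that] g_nz[OF that] g_bound[OF that]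
    by (rule square_bias_add_outcome_variance_le_L_f)
  have risk: "(\<integral>z. q_mix qphi py pt x z * L_f f g pY z t \<partial>N)
      \<le> eps_F N qphi py f g pY x t + M * sqrt (D_KL N (q_t qphi py x t) (q_t qphi py x (\<not> t)) / 2)" for t
    unfolding eps_F_def using N pt_nonneg pt_sum q KL_ac KL_int L_meas L_range
    by (rule integral_q_mix_le_KL)
  have risk_sum: "(\<integral>z. q_mix qphi py pt x z * L_f f g pY z False \<partial>N)
      + (\<integral>z. q_mix qphi py pt x z * L_f f g pY z True \<partial>N)
      \<le> eps_F N qphi py f g pY x False + eps_F N qphi py f g pY x True + M * D_bal N qphi py x"
    using risk[of False] risk[of True] by (simp add: D_bal_def UNIV_bool distrib_left)
  have "eps_f N qphi py pt f j x
      \<le> 2 * (G\<^sup>2 * ((\<integral>z. q_mix qphi py pt x z * L_f f g pY z False \<partial>N)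
                   + (\<integral>z. q_mix qphi py pt x z * L_f f g pY z True \<partial>N))
             - V_Y N qphi py pt j pY x)"
    using prob_density_q_mix[of pt x, OF pt_nonneg pt_sum q] L_meas
      borel_measurable_outcome_variance[OF pY_meas j_meas] L_bound pY_nonneg bias
    by (rule eps_f_le_mixture_risk)
  then show ?thesis
    using mult_left_mono[OF risk_sum zero_le_power2[of G]] by (smt (verit))
qed

end
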